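(* Let $S=(\mathcal{E},\Sigma,X,\mathcal{O})$ be a distinguishable experiment entity, with central eigen closure system $\mathcal{Y}_{eig}$ and state eigen closure system $\mathcal{F}_{eig}$. Then $\mathcal{F}_{eig}=\mathcal{Y}_{eig}(state)$.
   Context: An entity $S=(\mathcal{E},\Sigma,X,\mathcal{O})$ consists of sets $\mathcal{E},\Sigma$ and for each $e\in\mathcal{E},p\in\Sigma$ a nonempty set $O(e,p)$, with $X=\bigcup O(e,p)$; $O(e)=\bigcup_pO(e,p)$. It is a distinguishable experiment entity iff $O(e)\cap O(f)=\emptyset$ for all distinct $e,f\in\mathcal{E}$. Central eigen map: $(e,p)\in eig(A)\iff O(e,p)\subseteq A$ for $A\subseteq X$; $\mathcal{Y}_{eig}=\{eig(A):A\subseteq X\}$. For $Y\in\mathcal{Y}_{eig}$, $Y_{state}=\{p\in\Sigma:(e,p)\in Y\text{ for all }e\in\mathcal{E}\}$ and $\mathcal{Y}_{eig}(state)=\{Y_{state}:Y\in\mathcal{Y}_{eig}\}$. For $e\in\mathcal{E}$, $eig_e(A)=\{p: O(e,p)\subseteq A\}$ for $A\subseteq O(e)$, $\mathcal{F}(e)=\{eig_e(A):A\subseteq O(e)\}$, and $\mathcal{F}_{eig}$ is the set of all intersections of families of elements of $\bigcup_e\mathcal{F}(e)$. *)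

theory Defs
  imports Main
begin

definition entity :: "'e set \<Rightarrow> 'p set \<Rightarrow> ('e \<Rightarrow> 'p \<Rightarrow> 'x set) \<Rightarrow> bool" where
  "entity E Sig Ob \<longleftrightarrow> (\<forall>e\<in>E. \<forall>p\<in>Sig. Ob e p \<noteq> {})"

definition outcomes :: "'e set \<Rightarrow> 'p set \<Rightarrow> ('e \<Rightarrow> 'p \<Rightarrow> 'x set) \<Rightarrow> 'x set" where
  "outcomes E Sig Ob = (\<Union>e\<in>E. \<Union>p\<in>Sig. Ob e p)"

definition outcomes_of :: "'p set \<Rightarrow> ('e \<Rightarrow> 'p \<Rightarrow> 'x set) \<Rightarrow> 'e \<Rightarrow> 'x set" where
  "outcomes_of Sig Ob e = (\<Union>p\<in>Sig. Ob e p)"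

definition distinguishable_experiment_entity ::
  "'e set \<Rightarrow> 'p set \<Rightarrow> ('e \<Rightarrow> 'p \<Rightarrow> 'x set) \<Rightarrow> bool" where
  "distinguishable_experiment_entity E Sig Ob \<longleftrightarrow> entity E Sig Ob \<and>
     (\<forall>e\<in>E. \<forall>f\<in>E. e \<noteq> f \<longrightarrow> outcomes_of Sig Ob e \<inter> outcomes_of Sig Ob f = {})"

definition eig :: "'e set \<Rightarrow> 'p set \<Rightarrow> ('e \<Rightarrow> 'p \<Rightarrow> 'x set) \<Rightarrow> 'x set \<Rightarrow> ('e \<times> 'p) set" where
  "eig E Sig Ob A = {(e, p). e \<in> E \<and> p \<in> Sig \<and> Ob e p \<subseteq> A}"

definition Y_eig :: "'e set \<Rightarrow> 'p set \<Rightarrow> ('e \<Rightarrow> 'p \<Rightarrow> 'x set) \<Rightarrow> ('e \<times> 'p) set set" where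
  "Y_eig E Sig Ob = {eig E Sig Ob A | A. A \<subseteq> outcomes E Sig Ob}"

definition state_part :: "'e set \<Rightarrow> 'p set \<Rightarrow> ('e \<times> 'p) set \<Rightarrow> 'p set" where
  "state_part E Sig Y = {p \<in> Sig. \<forall>e\<in>E. (e, p) \<in> Y}"

definition Y_eig_state :: "'e set \<Rightarrow> 'p set \<Rightarrow> ('e \<Rightarrow> 'p \<Rightarrow> 'x set) \<Rightarrow> 'p set set" where
  "Y_eig_state E Sig Ob = state_part E Sig ` Y_eig E Sig Ob"

definition eig_e :: "'p set \<Rightarrow> ('e \<Rightarrow> 'p \<Rightarrow> 'x set) \<Rightarrow> 'e \<Rightarrow> 'x set \<Rightarrow> 'p set" where
  "eig_e Sig Ob e A = {p \<in> Sig. Ob e p \<subseteq> A}"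

definition F_exp :: "'p set \<Rightarrow> ('e \<Rightarrow> 'p \<Rightarrow> 'x set) \<Rightarrow> 'e \<Rightarrow> 'p set set" where
  "F_exp Sig Ob e = {eig_e Sig Ob e A | A. A \<subseteq> outcomes_of Sig Ob e}"

text \<open>All intersections (relative to Sigma; the empty family gives Sigma) of
  families of elements of the union of the F(e).\<close>
definition F_eig :: "'e set \<Rightarrow> 'p set \<Rightarrow> ('e \<Rightarrow> 'p \<Rightarrow> 'x set) \<Rightarrow> 'p set set" where
  "F_eig E Sig Ob = {Sig \<inter> \<Inter>G | G. G \<subseteq> (\<Union>e\<in>E. F_exp Sig Ob e)}"

end

theory Submission
  imports Defs
begin

text \<open>A state set in \<open>\<Y>\<^sub>e\<^sub>i\<^sub>g(state)\<close> is cut out by one outcome set \<open>A\<close> imposed on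
  every experiment at once, so it is the intersection of the sets \<open>eig\<^sub>e(A)\<close> and lies in
  \<open>\<F>\<^sub>e\<^sub>i\<^sub>g\<close>. Conversely, an element of \<open>\<F>\<^sub>e\<^sub>i\<^sub>g\<close> is given by a family of constraints
  \<open>O(e,p) \<subseteq> B\<close>, each concerning a single experiment. Since distinct experiments have
  disjoint outcome sets, all these constraints glue into a single outcome set \<open>A\<close>:
  keep an outcome iff it satisfies every constraint posed on the experiment it belongs to.\<close>

lemma Ob_subset_outcomes_of: "p \<in> Sig \<Longrightarrow> Ob e p \<subseteq> outcomes_of Sig Ob e"
  unfolding outcomes_of_def by blast

lemma eig_e_Int_outcomes_of:
  "eig_e Sig Ob e (A \<inter> outcomes_of Sig Ob e) = eig_e Sig Ob e A"
  unfolding eig_e_def using Ob_subset_outcomes_of[of _ Sig Ob e] by auto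

lemma eig_e_in_F_exp: "eig_e Sig Ob e A \<in> F_exp Sig Ob e"
proof -
  have "eig_e Sig Ob e A = eig_e Sig Ob e (A \<inter> outcomes_of Sig Ob e)"
    by (simp add: eig_e_Int_outcomes_of)
  then show ?thesis
    unfolding F_exp_def by blast
qed

lemma state_part_eig:
  "state_part E Sig (eig E Sig Ob A) = {p \<in> Sig. \<forall>e\<in>E. Ob e p \<subseteq> A}"
  unfolding state_part_def eig_def by auto

lemma Y_eig_state_subset_F_eig: "Y_eig_state E Sig Ob \<subseteq> F_eig E Sig Ob"
proof
  fix S assume "S \<in> Y_eig_state E Sig Ob"
  then obtain A where "S = state_part E Sig (eig E Sig Ob A)"
    unfolding Y_eig_state_def Y_eig_def by auto
  then have S: "S = {p \<in> Sig. \<forall>e\<in>E. Ob e p \<subseteq> A}"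
    by (simp add: state_part_eig)
  let ?G = "(\<lambda>e. eig_e Sig Ob e A) ` E"
  have "?G \<subseteq> (\<Union>e\<in>E. F_exp Sig Ob e)"
    using eig_e_in_F_exp by fast
  moreover have "S = Sig \<inter> \<Inter>?G"
    unfolding S eig_e_def by auto
  ultimately show "S \<in> F_eig E Sig Ob"
    unfolding F_eig_def by auto
qed

lemma distinguishable_experiment_entity_outcomes_of_eq:
  assumes "distinguishable_experiment_entity E Sig Ob" and "e \<in> E" and "f \<in> E"
    and "x \<in> outcomes_of Sig Ob e" and "x \<in> outcomes_of Sig Ob f"
  shows "e = f"
  using assms unfolding distinguishable_experiment_entity_def by (metis disjoint_iff)

lemma distinguishable_glue_constraints:
  assumes "distinguishable_experiment_entity E Sig Ob" and "fst ` R \<subseteq> E"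
  obtains A where "A \<subseteq> outcomes E Sig Ob"
    and "\<And>p. p \<in> Sig \<Longrightarrow> (\<forall>e\<in>E. Ob e p \<subseteq> A) \<longleftrightarrow> (\<forall>(e, B)\<in>R. Ob e p \<subseteq> B)"
proof
  define A where
    "A = {x \<in> outcomes E Sig Ob. \<forall>(e, B)\<in>R. x \<in> outcomes_of Sig Ob e \<longrightarrow> x \<in> B}"
  show "A \<subseteq> outcomes E Sig Ob"
    unfolding A_def by blast
  fix p assume p: "p \<in> Sig"
  show "(\<forall>e\<in>E. Ob e p \<subseteq> A) \<longleftrightarrow> (\<forall>(e, B)\<in>R. Ob e p \<subseteq> B)"
  proof
    assume A: "\<forall>e\<in>E. Ob e p \<subseteq> A"
    show "\<forall>(e, B)\<in>R. Ob e p \<subseteq> B"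
    proof (intro ballI, clarify)
      fix e B x assume "(e, B) \<in> R" "x \<in> Ob e p"
      moreover from this have "e \<in> E" and "x \<in> outcomes_of Sig Ob e"
        using assms(2) Ob_subset_outcomes_of[OF p] by force+
      ultimately show "x \<in> B"
        using A unfolding A_def by blast
    qed
  next
    assume R: "\<forall>(e, B)\<in>R. Ob e p \<subseteq> B"
    have "Ob e p \<subseteq> A" if e: "e \<in> E" for e
    proof
      fix x assume x: "x \<in> Ob e p"
      then have x_e: "x \<in> outcomes_of Sig Ob e"
        using Ob_subset_outcomes_of[OF p, of Ob e] by blast
      have "x \<in> outcomes E Sig Ob"
        using x p e unfolding outcomes_def by auto
      moreover have "x \<in> B" if "(f, B) \<in> R" "x \<in> outcomes_of Sig Ob f" for f B
      proof -
        have "f = e"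
          using distinguishable_experiment_entity_outcomes_of_eq[OF assms(1) _ e _ x_e] that assms(2) by force
        then show ?thesis
          using that(1) R x by blast
      qed
      ultimately show "x \<in> A"
        unfolding A_def by blast
    qed
    then show "\<forall>e\<in>E. Ob e p \<subseteq> A" ..
  qed
qed

lemma F_eig_subset_Y_eig_state:
  assumes "distinguishable_experiment_entity E Sig Ob"
  shows "F_eig E Sig Ob \<subseteq> Y_eig_state E Sig Ob"
proof
  fix S assume "S \<in> F_eig E Sig Ob"
  then obtain G where S: "S = Sig \<inter> \<Inter>G" and G: "G \<subseteq> (\<Union>e\<in>E. F_exp Sig Ob e)"
    unfolding F_eig_def by auto
  define R where "R = {(e, B). e \<in> E \<and> eig_e Sig Ob e B \<in> G}"
  have "fst ` R \<subseteq> E"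
    unfolding R_def by auto
  then obtain A where A: "A \<subseteq> outcomes E Sig Ob"
    and glue: "\<And>p. p \<in> Sig \<Longrightarrow> (\<forall>e\<in>E. Ob e p \<subseteq> A) \<longleftrightarrow> (\<forall>(e, B)\<in>R. Ob e p \<subseteq> B)"
    using distinguishable_glue_constraints[OF assms] by metis
  have G_R: "G = (\<lambda>(e, B). eig_e Sig Ob e B) ` R"
    using G unfolding R_def F_exp_def by auto
  have "S = {p \<in> Sig. \<forall>(e, B)\<in>R. Ob e p \<subseteq> B}"
    unfolding S G_R eig_e_def by auto
  also have "\<dots> = state_part E Sig (eig E Sig Ob A)"
    unfolding state_part_eig using glue by blast
  finally show "S \<in> Y_eig_state E Sig Ob"
    using A unfolding Y_eig_state_def Y_eig_def by auto
qed

theorem mainTheorem7: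
  fixes E :: "'e set" and Sig :: "'p set" and Ob :: "'e \<Rightarrow> 'p \<Rightarrow> 'x set"
  assumes "distinguishable_experiment_entity E Sig Ob"
  shows "F_eig E Sig Ob = Y_eig_state E Sig Ob"
  using F_eig_subset_Y_eig_state[OF assms] Y_eig_state_subset_F_eig by (rule equalityI)

end
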